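(* Let $q$ be prime and let $S$ be the $k\times 2n$ generator matrix over $\mathbb{Z}_q$ of a stabilizer code on $n$ qudits with $k$ generators, and let $M\in\mathbb{Z}^{k\times 2n}$ be its invariant form. Then there exist integer vectors $\bar X_1,\dots,\bar X_{n-k},\bar Z_1,\dots,\bar Z_{n-k}\in\mathbb{Z}^{2n}$ such that (i) their reductions mod $q$ form a complete set of logical operators of the code, i.e. they commute mod $q$ with all rows of $S$, are independent of the stabilizers, and satisfy $\bar X_i\odot\bar Z_j\equiv\delta_{ij}$, $\bar X_i\odot\bar X_j\equiv\bar Z_i\odot\bar Z_j\equiv 0 \pmod q$ for all $i,j$; and (ii) each of them has symplectic product exactly $0$ over $\mathbb{Z}$ with every row of $M$. Moreover, constructing them does not change $M$.
   Context: $n$-qudit Paulis over $q$ levels are represented (up to phase) by exponent vectors $(a|b)\in\mathbb{Z}_q^{2n}$; integer lifts are in $\mathbb{Z}^{2n}$. Symplectic product: $u\odot v=\sum_{l=1}^n (v_{z,l}u_{x,l}-v_{x,l}u_{z,l})$, computed mod $q$ or over $\mathbb{Z}$. Two Paulis commute iff their symplectic product is $0 \bmod q$. Logical operators are elements of the normalizer of the stabilizer group not in the stabilizer group. An invariant form of $S$ is an integer matrix $M\equiv S\pmod q$ whose rows have pairwise integer symplectic product $0$ (obtained from the canonical form $(I_k\ X_2|Z_1\ Z_2)$ by adding to $Z_1$ the strictly lower triangular matrix $L$ with $L_{ij}=\phi(s_i)\odot\phi(s_j)$ over $\mathbb{Z}$ for $i>j$). *)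

theory Defs
  imports Main "HOL-Number_Theory.Cong"
begin

text \<open>A vector in Z^{2n} (or an integer lift of a vector in Z_q^{2n}) is a
  function v :: nat => int, of which only the components 0..2n-1 are relevant:
  components 0..n-1 form the X-part, components n..2n-1 form the Z-part.
  A k x 2n matrix is a function nat => nat => int (row index, column index).\<close>

type_synonym ivec = "nat \<Rightarrow> int"
type_synonym imat = "nat \<Rightarrow> nat \<Rightarrow> int"

definition sympl :: "nat \<Rightarrow> ivec \<Rightarrow> ivec \<Rightarrow> int" where
  "sympl n u v = (\<Sum>l<n. v (n + l) * u l - v l * u (n + l))"

definition zq_matrix :: "int \<Rightarrow> nat \<Rightarrow> nat \<Rightarrow> imat \<Rightarrow> bool" where
  "zq_matrix q k n S \<longleftrightarrow> (\<forall>i<k. \<forall>c<2*n. 0 \<le> S i c \<and> S i c < q)"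

definition rows_independent_mod :: "int \<Rightarrow> nat \<Rightarrow> nat \<Rightarrow> imat \<Rightarrow> bool" where
  "rows_independent_mod q k n S \<longleftrightarrow>
     (\<forall>a :: nat \<Rightarrow> int. (\<forall>c<2*n. [(\<Sum>i<k. a i * S i c) = 0] (mod q))
        \<longrightarrow> (\<forall>i<k. [a i = 0] (mod q)))"

definition stabilizer_generator_matrix :: "int \<Rightarrow> nat \<Rightarrow> nat \<Rightarrow> imat \<Rightarrow> bool" where
  "stabilizer_generator_matrix q k n S \<longleftrightarrow>
     zq_matrix q k n S \<and> rows_independent_mod q k n S \<and>
     (\<forall>i<k. \<forall>j<k. [sympl n (S i) (S j) = 0] (mod q))"

text \<open>Canonical form (I_k X_2 | Z_1 Z_2): the first k columns of the X-part are I_k.\<close>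
definition canonical_form :: "nat \<Rightarrow> nat \<Rightarrow> imat \<Rightarrow> bool" where
  "canonical_form k n S \<longleftrightarrow> (\<forall>i<k. \<forall>j<k. S i j = (if i = j then 1 else 0))"

text \<open>Invariant form: add to Z_1 the strictly lower triangular matrix L with
  L_ij = phi(s_i) . phi(s_j) (over Z) for i > j. Z_1 occupies columns n+j, j<k.\<close>
definition invariant_form :: "nat \<Rightarrow> nat \<Rightarrow> imat \<Rightarrow> imat" where
  "invariant_form k n S = (\<lambda>i c.
     if n \<le> c \<and> c - n < k \<and> c - n < i then S i c + sympl n (S i) (S (c - n)) else S i c)"

definition complete_logicals ::
  "int \<Rightarrow> nat \<Rightarrow> nat \<Rightarrow> imat \<Rightarrow> imat \<Rightarrow> imat \<Rightarrow> bool" where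
  "complete_logicals q k n S Xb Zb \<longleftrightarrow>
     \<comment> \<open>commute mod q with all stabilizer generators\<close>
     (\<forall>i<n-k. \<forall>r<k. [sympl n (Xb i) (S r) = 0] (mod q) \<and> [sympl n (Zb i) (S r) = 0] (mod q)) \<and>
     \<comment> \<open>independent of the stabilizers: no nontrivial Z_q-combination lies in the stabilizer span\<close>
     (\<forall>a b c :: nat \<Rightarrow> int.
        (\<forall>col<2*n. [(\<Sum>i<n-k. a i * Xb i col + b i * Zb i col) = (\<Sum>r<k. c r * S r col)] (mod q))
        \<longrightarrow> (\<forall>i<n-k. [a i = 0] (mod q) \<and> [b i = 0] (mod q))) \<and>
     \<comment> \<open>canonical symplectic relations\<close>
     (\<forall>i<n-k. \<forall>j<n-k.
        [sympl n (Xb i) (Zb j) = (if i = j then 1 else 0)] (mod q) \<and>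
        [sympl n (Xb i) (Xb j) = 0] (mod q) \<and>
        [sympl n (Zb i) (Zb j) = 0] (mod q))"

end

theory Submission
  imports Defs
begin

text \<open>For S = (I_k X_2 | Z_1 Z_2), write x_i and z_i for the i-th columns of X_2 and Z_2 and take
  X_i = (0 e_i | z_i 0) and Z_i = (0 0 | -x_i e_i). Their only corrections sit in the Z_1 slots,
  which pair against the identity block I_k: for every row r the correction cancels the
  X_2 resp. Z_2 entry of that row exactly over Z, and the Z_1 block of the row is never
  seen. Hence the operators commute over Z with S and with every matrix that differs from S
  only in the Z_1 block, in particular with the invariant form. The symplectic relations and
  the independence from the stabilizers are read off on the columns k+i and n+k+i.\<close>

definition logical_X :: "nat \<Rightarrow> nat \<Rightarrow> imat \<Rightarrow> imat" where
  "logical_X k n S i c =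
     (if c = k + i then 1 else if n \<le> c \<and> c < n + k then S (c - n) (n + k + i) else 0)"

definition logical_Z :: "nat \<Rightarrow> nat \<Rightarrow> imat \<Rightarrow> imat" where
  "logical_Z k n S i c =
     (if c = n + k + i then 1 else if n \<le> c \<and> c < n + k then - S (c - n) (k + i) else 0)"

lemma sum_lessThan_if_less:
  fixes f :: "nat \<Rightarrow> 'a::comm_monoid_add"
  assumes "k \<le> n"
  shows "(\<Sum>l<n. if l < k then f l else 0) = (\<Sum>l<k. f l)"
proof -
  have "{..<n} \<inter> {l. l < k} = {..<k}" using assms by auto
  then show ?thesis by (simp add: sum.If_cases)
qed

lemma sympl_logical_X:
  assumes "k + i < n"
  shows "sympl n (logical_X k n S i) v = v (n + k + i) - (\<Sum>l<k. v l * S l (n + k + i))"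
proof -
  have "sympl n (logical_X k n S i) v
      = (\<Sum>l<n. (if l = k + i then v (n + l) else 0) - (if l < k then v l * S l (n + k + i) else 0))"
    unfolding sympl_def logical_X_def using assms by (intro sum.cong) auto
  also have "\<dots> = v (n + k + i) - (\<Sum>l<k. v l * S l (n + k + i))"
    using assms by (simp add: sum_subtractf sum_lessThan_if_less add.assoc)
  finally show ?thesis .
qed

lemma sympl_logical_Z:
  assumes "k + i < n"
  shows "sympl n (logical_Z k n S i) v = (\<Sum>l<k. v l * S l (k + i)) - v (k + i)"
proof -
  have "sympl n (logical_Z k n S i) v
      = (\<Sum>l<n. (if l < k then v l * S l (k + i) else 0) - (if l = k + i then v l else 0))"
    unfolding sympl_def logical_Z_def using assms by (intro sum.cong) auto
  also have "\<dots> = (\<Sum>l<k. v l * S l (k + i)) - v (k + i)"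
    using assms by (simp add: sum_subtractf sum_lessThan_if_less)
  finally show ?thesis .
qed

lemma canonical_form_sum_row_combination:
  assumes "canonical_form k n S" and "l < k"
  shows "(\<Sum>r<k. c r * S r l) = c l"
proof -
  have "(\<Sum>r<k. c r * S r l) = (\<Sum>r<k. if r = l then c r else 0)"
    using assms unfolding canonical_form_def by (intro sum.cong) auto
  then show ?thesis using assms(2) by simp
qed

lemma sympl_logicals_eq_0:
  assumes "canonical_form k n S" and "k + i < n" and "r < k"
    and agree: "\<And>c. c < n \<or> n + k \<le> c \<Longrightarrow> v c = S r c"
  shows "sympl n (logical_X k n S i) v = 0" and "sympl n (logical_Z k n S i) v = 0"
proof -
  have row: "v l = (if l = r then 1 else 0)" if "l < k" for l
    using that assms(1,2,3) agree[of l] unfolding canonical_form_def by auto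
  have "(\<Sum>l<k. v l * S l c) = S r c" for c
  proof -
    have "(\<Sum>l<k. v l * S l c) = (\<Sum>l<k. if l = r then S l c else 0)"
      using row by (intro sum.cong) auto
    then show ?thesis using assms(3) by simp
  qed
  then show "sympl n (logical_X k n S i) v = 0" and "sympl n (logical_Z k n S i) v = 0"
    using assms(2) agree by (simp_all add: sympl_logical_X sympl_logical_Z)
qed

lemma invariant_form_eq_outside_Z1:
  "c < n \<or> n + k \<le> c \<Longrightarrow> invariant_form k n S r c = S r c"
  unfolding invariant_form_def by auto

lemma sympl_logicals:
  assumes "k + i < n" and "k + j < n"
  shows "sympl n (logical_X k n S i) (logical_Z k n S j) = (if i = j then 1 else 0)"
    and "sympl n (logical_X k n S i) (logical_X k n S j) = 0"
    and "sympl n (logical_Z k n S i) (logical_Z k n S j) = 0"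
  using assms by (simp_all add: sympl_logical_X sympl_logical_Z logical_X_def logical_Z_def)

lemma logicals_independent:
  assumes "canonical_form k n S" and "k \<le> n"
    and comb: "\<forall>col<2*n. [(\<Sum>i<n-k. a i * logical_X k n S i col + b i * logical_Z k n S i col)
                          = (\<Sum>r<k. c r * S r col)] (mod q)"
    and "i < n - k"
  shows "[a i = 0] (mod q)" and "[b i = 0] (mod q)"
proof -
  let ?L = "\<lambda>col. \<Sum>i<n-k. a i * logical_X k n S i col + b i * logical_Z k n S i col"
  have c0: "[c r = 0] (mod q)" if "r < k" for r
  proof -
    have "?L r = 0"
      using that assms(2) by (intro sum.neutral) (auto simp: logical_X_def logical_Z_def)
    then show ?thesis
      using comb[rule_format, of r] that assms(1,2)
      by (simp add: canonical_form_sum_row_combination cong_sym)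
  qed
  have "[(\<Sum>r<k. c r * S r col) = (\<Sum>r<k. 0 * S r col)] (mod q)" for col
    using c0 by (intro cong_sum cong_mult) auto
  then have stab0: "[(\<Sum>r<k. c r * S r col) = 0] (mod q)" for col
    by simp
  have "?L (k + i) = (\<Sum>i'<n-k. if i' = i then a i' else 0)"
    using assms(4) by (intro sum.cong) (auto simp: logical_X_def logical_Z_def)
  moreover have "?L (n + k + i) = (\<Sum>i'<n-k. if i' = i then b i' else 0)"
    using assms(4) by (intro sum.cong) (auto simp: logical_X_def logical_Z_def)
  ultimately have La: "?L (k + i) = a i" and Lb: "?L (n + k + i) = b i"
    using assms(4) by simp_all
  have "k + i < 2 * n" and "n + k + i < 2 * n" using assms(4) by auto
  then have "[a i = (\<Sum>r<k. c r * S r (k + i))] (mod q)"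
    and "[b i = (\<Sum>r<k. c r * S r (n + k + i))] (mod q)"
    using comb[rule_format, of "k + i"] comb[rule_format, of "n + k + i"] La Lb by simp_all
  then show "[a i = 0] (mod q)" and "[b i = 0] (mod q)"
    using stab0 by (auto intro: cong_trans)
qed

lemma complete_logicals_logical_X_Z:
  assumes "canonical_form k n S" and "k \<le> n"
  shows "complete_logicals q k n S (logical_X k n S) (logical_Z k n S)"
  unfolding complete_logicals_def
proof (intro conjI allI impI)
  fix i r assume "i < n - k" and "r < k"
  then show "[sympl n (logical_X k n S i) (S r) = 0] (mod q)"
    and "[sympl n (logical_Z k n S i) (S r) = 0] (mod q)"
    using sympl_logicals_eq_0[OF assms(1), of i r "S r"] by auto
next
  fix i j assume "i < n - k" and "j < n - k"
  then show "[sympl n (logical_X k n S i) (logical_Z k n S j) = (if i = j then 1 else 0)] (mod q)"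
    and "[sympl n (logical_X k n S i) (logical_X k n S j) = 0] (mod q)"
    and "[sympl n (logical_Z k n S i) (logical_Z k n S j) = 0] (mod q)"
    using sympl_logicals[of k i n j S] by auto
next
  fix a b c :: "nat \<Rightarrow> int" and i
  assume "\<forall>col<2*n. [(\<Sum>i<n-k. a i * logical_X k n S i col + b i * logical_Z k n S i col)
                       = (\<Sum>r<k. c r * S r col)] (mod q)" and "i < n - k"
  then show "[a i = 0] (mod q)" and "[b i = 0] (mod q)"
    using logicals_independent[OF assms] by blast+
qed

theorem lemma2:
  fixes q :: int and k n :: nat and S :: imat
  assumes "prime q"
    and "k \<le> n"
    and "stabilizer_generator_matrix q k n S"
    and "canonical_form k n S"
  shows "\<exists>Xb Zb :: imat.
           complete_logicals q k n S Xb Zb \<and>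
           (\<forall>i<n-k. \<forall>r<k. sympl n (Xb i) (invariant_form k n S r) = 0
                          \<and> sympl n (Zb i) (invariant_form k n S r) = 0)"
proof (intro exI conjI allI impI)
  show "complete_logicals q k n S (logical_X k n S) (logical_Z k n S)"
    using assms(4,2) by (rule complete_logicals_logical_X_Z)
  fix i r assume "i < n - k" and "r < k"
  then show "sympl n (logical_X k n S i) (invariant_form k n S r) = 0"
    and "sympl n (logical_Z k n S i) (invariant_form k n S r) = 0"
    using sympl_logicals_eq_0[OF assms(4)] invariant_form_eq_outside_Z1 by auto
qed

end
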